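(* Let $G$ be a $2$-free digraph on $n$ vertices. Then $\tilde{P}_3(G) \leq \frac{2}{25}n^3$.
   Context: All digraphs are finite, have no loops, and have at most one edge $uv$ (the ordered pair $(u,v)$) for each ordered pair of distinct vertices. A digraph is $2$-free if it has no directed cycle of length at most $2$, i.e. there are no distinct vertices $u,v$ with both $uv$ and $vu$ edges. An induced $3$-vertex directed path is a triple $(a,b,c)$ of distinct vertices such that $ab$ and $bc$ are edges and neither $ac$ nor $ca$ is an edge. $\tilde{P}_3(G)$ denotes the number of induced $3$-vertex directed paths in $G$. *)

theory Defs
  imports Complex_Main
begin

text \<open>A digraph on a finite vertex set V with edge relation E (E u v means the edge uv).
 Loopless, edges only between vertices of V; at most one edge per ordered pair is automatic.\<close>
definition digraph :: "'a set \<Rightarrow> ('a \<Rightarrow> 'a \<Rightarrow> bool) \<Rightarrow> bool" where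
  "digraph V E \<longleftrightarrow> finite V \<and> (\<forall>u v. E u v \<longrightarrow> u \<in> V \<and> v \<in> V \<and> u \<noteq> v)"

definition two_free :: "'a set \<Rightarrow> ('a \<Rightarrow> 'a \<Rightarrow> bool) \<Rightarrow> bool" where
  "two_free V E \<longleftrightarrow> (\<forall>u\<in>V. \<forall>v\<in>V. u \<noteq> v \<longrightarrow> \<not> (E u v \<and> E v u))"

definition induced_P3s :: "'a set \<Rightarrow> ('a \<Rightarrow> 'a \<Rightarrow> bool) \<Rightarrow> ('a \<times> 'a \<times> 'a) set" where
  "induced_P3s V E = {(a,b,c). a \<in> V \<and> b \<in> V \<and> c \<in> V \<and> a \<noteq> b \<and> b \<noteq> c \<and> a \<noteq> c
      \<and> E a b \<and> E b c \<and> \<not> E a c \<and> \<not> E c a}"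

definition P3_count :: "'a set \<Rightarrow> ('a \<Rightarrow> 'a \<Rightarrow> bool) \<Rightarrow> nat" where
  "P3_count V E = card (induced_P3s V E)"

end

theory Submission
  imports Defs
begin

(* For vertices a, b, c put
     w(a,b,c) = 45 o(b,a) o(b,c) + s(b,a) s(b,c) + 200 p(a,b,c),
   where o(b,a) = 1, -1, 0 records whether a -> b, b -> a or neither,
   s(b,a) = 0, 1, -4 records whether a = b, a and b are adjacent or not,
   and p(a,b,c) is the indicator of the induced path a -> b -> c.
   (1) For every single triple, the sum of w over its six orderings is at most 96;
       this is a finite check over the (2-free) configurations on three vertices.
   (2) Summing over V^3, symmetrisation gives 6 * Sum w <= 96 n^3.
   (3) The quadratic part of Sum w equals
       Sum_b (45 (Sum_a o(b,a))^2 + (Sum_a s(b,a))^2) >= 0.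
   (4) The path part is 200 * P3_count. *)

abbreviation triple_sum :: "'a set \<Rightarrow> ('a \<Rightarrow> 'a \<Rightarrow> 'a \<Rightarrow> real) \<Rightarrow> real" where
  "triple_sum V f \<equiv> (\<Sum>a\<in>V. \<Sum>b\<in>V. \<Sum>c\<in>V. f a b c)"

lemma triple_sum_swap12: "triple_sum V (\<lambda>a b c. f b a c) = triple_sum V f"
  by (rule sum.swap)

lemma triple_sum_swap23: "triple_sum V (\<lambda>a b c. f a c b) = triple_sum V f"
  by (rule sum.cong[OF refl], rule sum.swap)

lemma triple_sum_symmetrise:
  "6 * triple_sum V f =
     triple_sum V (\<lambda>a b c. f a b c + f a c b + f b a c + f b c a + f c a b + f c b a)"
proof -
  have acb: "triple_sum V (\<lambda>a b c. f a c b) = triple_sum V f"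
    by (rule triple_sum_swap23)
  have bac: "triple_sum V (\<lambda>a b c. f b a c) = triple_sum V f"
    by (rule triple_sum_swap12)
  have bca: "triple_sum V (\<lambda>a b c. f b c a) = triple_sum V f"
    using triple_sum_swap12[where f="\<lambda>a b c. f a c b"] acb by simp
  have cab: "triple_sum V (\<lambda>a b c. f c a b) = triple_sum V f"
    using triple_sum_swap23[where f="\<lambda>a b c. f b a c"] bac by simp
  have cba: "triple_sum V (\<lambda>a b c. f c b a) = triple_sum V f"
    using triple_sum_swap23[where f="\<lambda>a b c. f b c a"] bca by simp
  show ?thesis
    using acb bac bca cab cba by (simp add: sum.distrib)
qed

lemma triple_sum_square:
  "triple_sum V (\<lambda>a b c. g b a * g b c) = (\<Sum>b\<in>V. (\<Sum>a\<in>V. g b a)\<^sup>2)"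
proof -
  have "triple_sum V (\<lambda>a b c. g b a * g b c) = (\<Sum>b\<in>V. \<Sum>a\<in>V. \<Sum>c\<in>V. g b a * g b c)"
    by (rule sum.swap)
  also have "\<dots> = (\<Sum>b\<in>V. (\<Sum>a\<in>V. g b a)\<^sup>2)"
    by (simp add: power2_eq_square sum_product)
  finally show ?thesis .
qed

lemma triple_sum_square_nonneg: "triple_sum V (\<lambda>a b c. g b a * g b c) \<ge> 0"
  unfolding triple_sum_square by (intro sum_nonneg) simp

definition orient :: "('a \<Rightarrow> 'a \<Rightarrow> bool) \<Rightarrow> 'a \<Rightarrow> 'a \<Rightarrow> real" where
  "orient E b a = (if E a b then 1 else if E b a then -1 else 0)"

definition adj_weight :: "('a \<Rightarrow> 'a \<Rightarrow> bool) \<Rightarrow> 'a \<Rightarrow> 'a \<Rightarrow> real" where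
  "adj_weight E b a = (if a = b then 0 else if E a b \<or> E b a then 1 else -4)"

definition path_ind :: "('a \<Rightarrow> 'a \<Rightarrow> bool) \<Rightarrow> 'a \<Rightarrow> 'a \<Rightarrow> 'a \<Rightarrow> real" where
  "path_ind E a b c = (if a \<noteq> c \<and> E a b \<and> E b c \<and> \<not> E a c \<and> \<not> E c a then 1 else 0)"

definition weight :: "('a \<Rightarrow> 'a \<Rightarrow> bool) \<Rightarrow> 'a \<Rightarrow> 'a \<Rightarrow> 'a \<Rightarrow> real" where
  "weight E a b c =
     45 * orient E b a * orient E b c + adj_weight E b a * adj_weight E b c + 200 * path_ind E a b c"

lemma weight_symmetrised_le:
  assumes "\<And>u. \<not> E u u"
    and "\<not> (E a b \<and> E b a)" "\<not> (E b c \<and> E c b)" "\<not> (E a c \<and> E c a)"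
  shows "weight E a b c + weight E a c b + weight E b a c
       + weight E b c a + weight E c a b + weight E c b a \<le> 96"
  using assms
  by (cases "a = b"; cases "b = c"; cases "a = c")
     (simp_all add: weight_def orient_def adj_weight_def path_ind_def)

lemma P3_count_triple_sum:
  assumes "digraph V E"
  shows "real (P3_count V E) = triple_sum V (path_ind E)"
proof -
  have fin: "finite V" and edge: "\<And>u v. E u v \<Longrightarrow> u \<noteq> v"
    using assms unfolding digraph_def by auto
  have sub: "induced_P3s V E \<subseteq> V \<times> V \<times> V"
    unfolding induced_P3s_def by auto
  have "real (P3_count V E) = (\<Sum>t\<in>V \<times> V \<times> V. if t \<in> induced_P3s V E then 1 else 0)"
    using sub fin by (simp add: P3_count_def sum.If_cases Int_absorb1)
  also have "\<dots> = triple_sum V (\<lambda>a b c. if (a, b, c) \<in> induced_P3s V E then 1 else 0)"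
    by (simp add: sum.cartesian_product)
  also have "\<dots> = triple_sum V (path_ind E)"
    by (intro sum.cong refl) (auto simp: path_ind_def induced_P3s_def dest: edge)
  finally show ?thesis .
qed

theorem mainTheorem1:
  fixes V :: "'a set" and E :: "'a \<Rightarrow> 'a \<Rightarrow> bool"
  assumes "digraph V E" and "two_free V E"
  shows "real (P3_count V E) \<le> 2 / 25 * real (card V) ^ 3"
proof -
  have edge: "\<And>u v. E u v \<Longrightarrow> u \<in> V \<and> v \<in> V \<and> u \<noteq> v"
    using assms(1) unfolding digraph_def by auto
  have no_2cycle: "\<And>u v. \<not> (E u v \<and> E v u)"
    using assms(2) edge unfolding two_free_def by blast
  have "6 * triple_sum V (weight E) \<le> triple_sum V (\<lambda>a b c. 96)"
    unfolding triple_sum_symmetrise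
    by (intro sum_mono weight_symmetrised_le) (use edge no_2cycle in auto)
  then have upper: "triple_sum V (weight E) \<le> 16 * real (card V) ^ 3"
    by (simp add: power3_eq_cube)
  have "triple_sum V (weight E) =
          45 * triple_sum V (\<lambda>a b c. orient E b a * orient E b c)
        + triple_sum V (\<lambda>a b c. adj_weight E b a * adj_weight E b c)
        + 200 * triple_sum V (path_ind E)"
    unfolding weight_def by (simp only: sum.distrib sum_distrib_left mult.assoc)
  then have "200 * triple_sum V (path_ind E) \<le> triple_sum V (weight E)"
    using triple_sum_square_nonneg[where V=V and g="orient E"]
          triple_sum_square_nonneg[where V=V and g="adj_weight E"] by linarith
  with upper show ?thesis
    unfolding P3_count_triple_sum[OF assms(1)] by simp
qed

end
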